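(* Let $V$ be a complex vector space of finite dimension $N$. Let $F\in \mathrm{End}(V\otimes V)$ be an involutive symmetry and let $R=R(q)$ be a family of Hecke symmetries depending analytically on $q$ near $q=1$ with $R(1)=F$ and with $R(q)$, $F$ compatible for each $q$. Let $r\in\mathrm{End}(V\otimes V)$ be defined by the expansion $R(q)F=I+h\,r+O(h^2)$, $q=e^h$. Define the $\mathrm{End}(V\otimes V)$-valued function $$ r(u,v)=\frac{F\,u}{u-v}-\frac{r}{2}. $$ Then (1) $r_{\overline{21}}(v,u)+r_{\overline{12}}(u,v)=0$; (2) $[r_{\overline{12}}(u,v), r_{\overline{13}}(u,w)]+[r_{\overline{12}}(u,v), r_{\overline{23}}(v,w)]+[r_{\overline{13}}(u,w), r_{\overline{23}}(v,w)]=0$ in $\mathrm{End}(V^{\otimes 3})$, for all pairwise distinct $u,v,w$ (with $u\ne v$ etc.).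
   Context: A braiding is an invertible $R\in\mathrm{End}(V\otimes V)$ with $(R\otimes I)(I\otimes R)(R\otimes I)=(I\otimes R)(R\otimes I)(I\otimes R)$; it is an involutive symmetry if $R^2=I$, a Hecke symmetry if $(R-qI)(R+q^{-1}I)=0$, $q\ne\pm1$. $X_{12}=X\otimes I$, $X_{23}=I\otimes X$. Compatibility of $R,F$: $R_{12}F_{23}F_{12}=F_{23}F_{12}R_{23}$ and $R_{23}F_{12}F_{23}=F_{12}F_{23}R_{12}$. Overlined indices: for $X=X(a,b)\in\mathrm{End}(V\otimes V)$, $X_{\overline{12}}(a,b)=X(a,b)_{12}$, $X_{\overline{13}}(a,b)=F_{23}X(a,b)_{12}F_{23}^{-1}$, $X_{\overline{23}}(a,b)=F_{12}F_{23}X(a,b)_{12}F_{23}^{-1}F_{12}^{-1}$, and $X_{\overline{21}}(a,b)=F\,X(a,b)\,F$ (valid since $F$ is involutive). $[A,B]=AB-BA$. *)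

theory Defs
  imports "HOL-Analysis.Analysis"
begin

text \<open>V = complex^'n (dimension N = CARD('n)); End(V\<otimes>V) and End(V\<otimes>V\<otimes>V) as matrices
  indexed by the product bases.\<close>

type_synonym 'n end2 = "complex ^ ('n \<times> 'n) ^ ('n \<times> 'n)"
type_synonym 'n end3 = "complex ^ ('n \<times> 'n \<times> 'n) ^ ('n \<times> 'n \<times> 'n)"

definition csc :: "complex \<Rightarrow> complex ^ 'a ^ 'b \<Rightarrow> complex ^ 'a ^ 'b" where
  "csc c A = (\<chi> i j. c * A $ i $ j)"

text \<open>X_12 = X \<otimes> I\<close>
definition lift12 :: "'n::finite end2 \<Rightarrow> 'n end3" where
  "lift12 X = (\<chi> a b. X $ (fst a, fst (snd a)) $ (fst b, fst (snd b))
                    * (if snd (snd a) = snd (snd b) then 1 else 0))"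

text \<open>X_23 = I \<otimes> X\<close>
definition lift23 :: "'n::finite end2 \<Rightarrow> 'n end3" where
  "lift23 X = (\<chi> a b. (if fst a = fst b then 1 else 0) * X $ (snd a) $ (snd b))"

definition braiding :: "'n::finite end2 \<Rightarrow> bool" where
  "braiding R \<longleftrightarrow> invertible R \<and>
     lift12 R ** lift23 R ** lift12 R = lift23 R ** lift12 R ** lift23 R"

definition involutive_symmetry :: "'n::finite end2 \<Rightarrow> bool" where
  "involutive_symmetry R \<longleftrightarrow> braiding R \<and> R ** R = mat 1"

definition hecke_symmetry :: "'n::finite end2 \<Rightarrow> complex \<Rightarrow> bool" where
  "hecke_symmetry R q \<longleftrightarrow> braiding R \<and> q \<noteq> 1 \<and> q \<noteq> -1 \<and>
     (R - csc q (mat 1)) ** (R + csc (inverse q) (mat 1)) = 0"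

definition compatible :: "'n::finite end2 \<Rightarrow> 'n end2 \<Rightarrow> bool" where
  "compatible R F \<longleftrightarrow>
     lift12 R ** lift23 F ** lift12 F = lift23 F ** lift12 F ** lift23 R \<and>
     lift23 R ** lift12 F ** lift23 F = lift12 F ** lift23 F ** lift12 R"

definition ov12 :: "'n::finite end2 \<Rightarrow> 'n end3" where
  "ov12 X = lift12 X"

definition ov13 :: "'n::finite end2 \<Rightarrow> 'n end2 \<Rightarrow> 'n end3" where
  "ov13 F X = lift23 F ** lift12 X ** matrix_inv (lift23 F)"

definition ov23 :: "'n::finite end2 \<Rightarrow> 'n end2 \<Rightarrow> 'n end3" where
  "ov23 F X = lift12 F ** lift23 F ** lift12 X ** matrix_inv (lift23 F) ** matrix_inv (lift12 F)"

definition ov21 :: "'n::finite end2 \<Rightarrow> 'n end2 \<Rightarrow> 'n end2" where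
  "ov21 F X = F ** X ** F"

definition rfun :: "'n::finite end2 \<Rightarrow> 'n end2 \<Rightarrow> complex \<Rightarrow> complex \<Rightarrow> 'n end2" where
  "rfun F r u v = csc (u / (u - v)) F - csc (1/2) r"

definition commut :: "'a::ring_1 ^ 'n ^ 'n \<Rightarrow> 'a ^ 'n ^ 'n \<Rightarrow> 'a ^ 'n ^ 'n" where
  "commut A B = A ** B - B ** A"

end

theory Submission
  imports Defs
begin

(* Write R(e^h) = F + h X(h); the expansion hypothesis gives X(h) -> r F as h -> 0.
   The coefficient of h in the Hecke relation (R - q)(R + 1/q) = 0 yields the unitarity
   r + F r F = 2 F, which is part (1).  Compatibility of R(e^h) with F says exactly that
   X(h)_23 = F_12 F_23 X(h)_12 F_23 F_12; this kills the coefficient of h in the braid relation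
   of R(e^h), and its coefficient of h^2 becomes, in the limit, the classical Yang-Baxter
   equation for r in the overlined legs.  Part (2) then follows by expanding the commutators,
   using unitarity and the scalar identity a b - a c + b c = b for a = u/(u-v), b = u/(u-w),
   c = v/(v-w).
*)

lemma csc_nth [simp]: "csc c A $ i $ j = c * A $ i $ j"
  by (simp add: csc_def)

lemma csc_add_right: "csc c (A + B) = csc c A + csc c B"
  by (simp add: vec_eq_iff algebra_simps)

lemma csc_diff_right: "csc c (A - B) = csc c A - csc c B"
  by (simp add: vec_eq_iff algebra_simps)

lemma csc_add_left: "csc (a + b) A = csc a A + csc b A"
  by (simp add: vec_eq_iff algebra_simps)

lemma csc_diff_left: "csc (a - b) A = csc a A - csc b A"
  by (simp add: vec_eq_iff algebra_simps)

lemma csc_csc [simp]: "csc a (csc b A) = csc (a * b) A"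
  by (simp add: vec_eq_iff)

lemma csc_one [simp]: "csc 1 A = A"
  by (simp add: vec_eq_iff)

lemma csc_zero_left [simp]: "csc 0 A = 0"
  by (simp add: vec_eq_iff)

lemma csc_zero_right [simp]: "csc c 0 = 0"
  by (simp add: vec_eq_iff)

lemma csc_eq_0_iff: "csc c A = 0 \<longleftrightarrow> c = 0 \<or> A = 0"
  by (auto simp: vec_eq_iff)

lemma csc_cancel_left: "c \<noteq> 0 \<Longrightarrow> csc c A = csc c B \<longleftrightarrow> A = B"
  by (auto simp: vec_eq_iff)

lemma matrix_mult_csc_left: "csc c A ** B = csc c (A ** B)"
  by (simp add: vec_eq_iff matrix_matrix_mult_def sum_distrib_left algebra_simps)

lemma matrix_mult_csc_right: "A ** csc c B = csc c (A ** B)"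
  by (simp add: vec_eq_iff matrix_matrix_mult_def sum_distrib_left algebra_simps)

lemma matrix_add_rdistrib: "(B + C) ** A = B ** A + C ** A"
  by (simp add: vec_eq_iff matrix_matrix_mult_def sum.distrib algebra_simps)

lemma matrix_diff_ldistrib: "(A :: 'a::ring_1^'n^'m) ** (B - C) = A ** B - A ** C"
  by (simp add: vec_eq_iff matrix_matrix_mult_def right_diff_distrib sum_subtractf)

lemma matrix_diff_rdistrib: "((B :: 'a::ring_1^'n^'m) - C) ** A = B ** A - C ** A"
  by (simp add: vec_eq_iff matrix_matrix_mult_def left_diff_distrib sum_subtractf)

lemmas matrix_expand_simps = matrix_add_ldistrib matrix_add_rdistrib
  matrix_diff_ldistrib matrix_diff_rdistrib matrix_mul_assoc[symmetric]
  matrix_mult_csc_left matrix_mult_csc_right csc_add_right csc_diff_right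

lemma matrix_inv_involution:
  fixes A :: "'a::semiring_1^'m^'m"
  assumes "A ** A = mat 1"
  shows "matrix_inv A = A"
  unfolding matrix_inv_def
proof (rule some_equality)
  fix B assume B: "A ** B = mat 1 \<and> B ** A = mat 1"
  have "B = B ** (A ** A)" by (simp add: assms)
  also have "\<dots> = A" using B by (simp add: matrix_mul_assoc)
  finally show "B = A" .
qed (use assms in simp)

lemma commut_csc_diff:
  fixes A B P Q :: "complex^'m^'m"
  shows "commut (csc a A - csc x P) (csc b B - csc y Q) =
    csc (a*b) (commut A B) - csc (a*y) (commut A Q) - csc (x*b) (commut P B) + csc (x*y) (commut P Q)"
  by (simp add: commut_def matrix_expand_simps csc_diff_left algebra_simps)

lemma sum_UNIV_prod:
  "(\<Sum>c\<in>(UNIV :: ('a::finite \<times> 'b::finite) set). f c) = (\<Sum>x\<in>UNIV. \<Sum>y\<in>UNIV. f (x, y))"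
  by (simp add: sum.cartesian_product UNIV_Times_UNIV[symmetric] del: UNIV_Times_UNIV)

lemma lift12_mult: "lift12 (A ** B) = lift12 A ** lift12 B"
  by (simp add: vec_eq_iff lift12_def matrix_matrix_mult_def sum_UNIV_prod)
     (auto simp: sum_distrib_left sum_distrib_right if_distrib if_distribR sum.delta cong: if_cong)

lemma lift23_mult: "lift23 (A ** B) = lift23 A ** lift23 B"
proof -
  have pull_if: "(\<Sum>y\<in>Y. if P then f y else 0) = (if P then sum f Y else 0)"
    for P and f :: "_ \<Rightarrow> complex" and Y by simp
  show ?thesis
    by (simp add: vec_eq_iff lift23_def matrix_matrix_mult_def sum_UNIV_prod)
       (auto simp: if_distrib if_distribR pull_if sum.delta cong: if_cong)
qed

lemma lift12_add: "lift12 (A + B) = lift12 A + lift12 B"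
  by (simp add: vec_eq_iff lift12_def algebra_simps)

lemma lift12_diff: "lift12 (A - B) = lift12 A - lift12 B"
  by (simp add: vec_eq_iff lift12_def algebra_simps)

lemma lift12_csc: "lift12 (csc c A) = csc c (lift12 A)"
  by (simp add: vec_eq_iff lift12_def)

lemma lift12_one: "lift12 (mat 1) = mat 1"
  by (auto simp: vec_eq_iff lift12_def mat_def prod_eq_iff)

lemma lift23_add: "lift23 (A + B) = lift23 A + lift23 B"
  by (simp add: vec_eq_iff lift23_def algebra_simps)

lemma lift23_csc: "lift23 (csc c A) = csc c (lift23 A)"
  by (simp add: vec_eq_iff lift23_def)

lemma lift23_one: "lift23 (mat 1) = mat 1"
  by (auto simp: vec_eq_iff lift23_def mat_def prod_eq_iff)

lemma tendsto_matrix_mult [tendsto_intros]: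
  fixes A :: "'x \<Rightarrow> complex^'n^'m"
  assumes "(A \<longlongrightarrow> A0) F" "(B \<longlongrightarrow> B0) F"
  shows "((\<lambda>x. A x ** B x) \<longlongrightarrow> A0 ** B0) F"
  unfolding matrix_matrix_mult_def
  by (intro tendsto_vec_lambda tendsto_sum tendsto_mult tendsto_vec_nth assms)

lemma tendsto_csc [tendsto_intros]:
  fixes A :: "'x \<Rightarrow> complex^'n^'m"
  assumes "(c \<longlongrightarrow> c0) F" "(A \<longlongrightarrow> A0) F"
  shows "((\<lambda>x. csc (c x) (A x)) \<longlongrightarrow> csc c0 A0) F"
  unfolding csc_def
  by (intro tendsto_vec_lambda tendsto_mult tendsto_vec_nth assms)

lemma tendsto_lift12 [tendsto_intros]:
  "(A \<longlongrightarrow> A0) F \<Longrightarrow> ((\<lambda>x. lift12 (A x)) \<longlongrightarrow> lift12 A0) F"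
  unfolding lift12_def by (intro tendsto_vec_lambda tendsto_mult tendsto_vec_nth tendsto_const)

lemma tendsto_lift23 [tendsto_intros]:
  "(A \<longlongrightarrow> A0) F \<Longrightarrow> ((\<lambda>x. lift23 (A x)) \<longlongrightarrow> lift23 A0) F"
  unfolding lift23_def by (intro tendsto_vec_lambda tendsto_mult tendsto_vec_nth tendsto_const)

lemma tendsto_eventually_eq_imp_eq:
  fixes f g :: "'a \<Rightarrow> 'b::t2_space"
  assumes "F \<noteq> bot" "(f \<longlongrightarrow> a) F" "(g \<longlongrightarrow> b) F" "eventually (\<lambda>x. f x = g x) F"
  shows "a = b"
  using assms tendsto_cong tendsto_unique by metis

lemma eventually_exp_ne_1_neg1: "\<forall>\<^sub>F h in at (0::complex). exp h \<noteq> 1 \<and> exp h \<noteq> -1"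
proof -
  have quotient: "((\<lambda>h. (exp h - 1) / h) \<longlongrightarrow> (1::complex)) (at 0)"
    using DERIV_exp[of 0] by (simp add: has_field_derivative_iff)
  have "\<forall>\<^sub>F h in at (0::complex). exp h \<noteq> 1"
    using tendsto_imp_eventually_ne[OF quotient, of 0] by (simp add: eventually_conj_iff)
  moreover have "\<forall>\<^sub>F h in at (0::complex). exp h \<noteq> -1"
    by (rule tendsto_imp_eventually_ne[where c=1]) (auto intro!: tendsto_eq_intros)
  ultimately show ?thesis
    by eventually_elim auto
qed

lemma tendsto_exp_neg_minus_exp_div: "((\<lambda>h::complex. (exp (-h) - exp h) / h) \<longlongrightarrow> -2) (at 0)"
proof -
  have "((\<lambda>h::complex. exp (-h) - exp h) has_field_derivative (-1 - 1)) (at 0)"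
    by (auto intro!: derivative_eq_intros)
  then show ?thesis by (simp add: has_field_derivative_iff)
qed

lemma difference_quotient_tendsto:
  fixes R :: "complex \<Rightarrow> complex^'a^'a"
  assumes FF: "F ** F = mat 1"
    and bound: "\<exists>C. \<forall>\<^sub>F h in at 0. norm (R h ** F - mat 1 - csc h r) \<le> C * norm h ^ 2"
  shows "((\<lambda>h. csc (1/h) (R h - F)) \<longlongrightarrow> r ** F) (at 0)"
proof -
  obtain C where C: "\<forall>\<^sub>F h in at 0. norm (R h ** F - mat 1 - csc h r) \<le> C * norm h ^ 2"
    using bound by blast
  define M where "M h = csc (1/h) (R h ** F - mat 1 - csc h r)" for h
  have "(M \<longlongrightarrow> 0) (at 0)"
  proof (rule vec_tendstoI, rule vec_tendstoI)
    fix i j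
    have "\<forall>\<^sub>F h in at 0. norm (M h $ i $ j) \<le> C * norm h"
      using C eventually_neq_at_within[of 0 0 UNIV]
    proof eventually_elim
      case (elim h)
      let ?E = "R h ** F - mat 1 - csc h r"
      have "norm (?E $ i $ j) \<le> norm ?E"
        using Finite_Cartesian_Product.norm_nth_le[of "?E $ i" j]
          Finite_Cartesian_Product.norm_nth_le[of ?E i] by linarith
      then have "norm (?E $ i $ j) / norm h \<le> C * norm h ^ 2 / norm h"
        using elim by (simp add: divide_right_mono)
      then show ?case
        using elim by (simp add: M_def norm_divide power2_eq_square)
    qed
    moreover have "((\<lambda>h::complex. C * norm h) \<longlongrightarrow> 0) (at 0)"
      by (intro tendsto_mult_right_zero tendsto_norm_zero tendsto_ident_at)
    ultimately show "((\<lambda>h. M h $ i $ j) \<longlongrightarrow> 0 $ i $ j) (at 0)"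
      using Lim_null_comparison by fastforce
  qed
  then have "((\<lambda>h. (M h + r) ** F) \<longlongrightarrow> (0 + r) ** F) (at 0)"
    by (intro tendsto_intros)
  moreover have "\<forall>\<^sub>F h in at 0. (M h + r) ** F = csc (1/h) (R h - F)"
    using eventually_neq_at_within[of 0 0 UNIV]
  proof eventually_elim
    case (elim h)
    then have "M h + r = csc (1/h) (R h ** F - mat 1)"
      by (simp add: M_def vec_eq_iff field_simps)
    then show ?case
      by (simp add: matrix_expand_simps FF flip: matrix_mul_assoc)
  qed
  ultimately show ?thesis
    using tendsto_cong by force
qed

lemma hecke_first_order:
  fixes F \<rho> :: "'n::finite end2"
  assumes FF: "F ** F = mat 1" and X: "(X \<longlongrightarrow> \<rho>) (at 0)"
    and hecke: "\<forall>\<^sub>F h in at 0. hecke_symmetry (F + csc h (X h)) (exp h)"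
  shows "F ** \<rho> + \<rho> ** F = csc 2 F"
proof -
  define G where "G h = F ** X h + X h ** F + csc h (X h ** X h)
      + csc ((exp (-h) - exp h) / h) (F + csc h (X h))" for h
  have "(G \<longlongrightarrow> F ** \<rho> + \<rho> ** F + csc 0 (\<rho> ** \<rho>) + csc (-2) (F + csc 0 \<rho>)) (at 0)"
    unfolding G_def by (intro tendsto_intros X tendsto_exp_neg_minus_exp_div tendsto_ident_at)
  moreover have "\<forall>\<^sub>F h in at 0. G h = 0"
    using hecke eventually_neq_at_within[of 0 0 UNIV]
  proof eventually_elim
    case (elim h)
    define Y where "Y = X h"
    define q where "q = exp h"
    have "(F + csc h Y - csc q (mat 1)) ** (F + csc h Y + csc (inverse q) (mat 1)) = 0"
      using elim by (simp add: Y_def q_def hecke_symmetry_def)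
    moreover have "(F + csc h Y - csc q (mat 1)) ** (F + csc h Y + csc (inverse q) (mat 1))
        = csc h (F ** Y) + csc h (Y ** F) + csc (h * h) (Y ** Y)
          + csc (inverse q - q) F + csc (h * (inverse q - q)) Y + csc (1 - q * inverse q) (mat 1)"
      by (simp add: matrix_expand_simps FF csc_add_left csc_diff_left algebra_simps)
    moreover have "csc h (G h) = csc h (F ** Y) + csc h (Y ** F) + csc (h * h) (Y ** Y)
        + csc (inverse q - q) F + csc (h * (inverse q - q)) Y"
      using elim unfolding G_def Y_def[symmetric]
      by (simp add: vec_eq_iff field_simps q_def exp_minus)
    ultimately show ?case
      using elim by (simp add: q_def csc_eq_0_iff)
  qed
  ultimately have "F ** \<rho> + \<rho> ** F + csc (-2) F = 0"
    using tendsto_eventually_eq_imp_eq[OF at_neq_bot _ tendsto_const] by fastforce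
  then show ?thesis
    by (simp add: vec_eq_iff algebra_simps)
qed

locale braided_involutions =
  fixes f1 f2 :: "complex^'m^'m"
  assumes f1_squared: "f1 ** f1 = mat 1"
    and f2_squared: "f2 ** f2 = mat 1"
    and braid: "f1 ** f2 ** f1 = f2 ** f1 ** f2"
begin

lemma f1_f1_mult: "f1 ** (f1 ** X) = X"
  by (simp add: matrix_mul_assoc f1_squared)

lemma f2_f2_mult: "f2 ** (f2 ** X) = X"
  by (simp add: matrix_mul_assoc f2_squared)

lemma braid_assoc: "f1 ** (f2 ** f1) = f2 ** (f1 ** f2)"
  using braid by (simp add: matrix_mul_assoc)

lemma braid_mult: "f1 ** (f2 ** (f1 ** X)) = f2 ** (f1 ** (f2 ** X))"
  using braid by (simp add: matrix_mul_assoc)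

lemmas involution_simps = f1_squared f2_squared f1_f1_mult f2_f2_mult braid_assoc braid_mult

text \<open>For \<open>f1 = F\<^sub>1\<^sub>2\<close> and \<open>f2 = F\<^sub>2\<^sub>3\<close>, \<open>at13\<close> and \<open>at23\<close> send \<open>X\<^sub>1\<^sub>2\<close> to the
  overlined \<open>X\<^sub>1\<^sub>3\<close> and \<open>X\<^sub>2\<^sub>3\<close>.\<close>
definition at13 :: "complex^'m^'m \<Rightarrow> complex^'m^'m" where
  "at13 X = f2 ** X ** f2"

definition at23 :: "complex^'m^'m \<Rightarrow> complex^'m^'m" where
  "at23 X = f1 ** f2 ** X ** f2 ** f1"

definition classical_ybe :: "complex^'m^'m \<Rightarrow> bool" where
  "classical_ybe P \<longleftrightarrow> commut P (at13 P) + commut P (at23 P) + commut (at13 P) (at23 P) = 0"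

text \<open>The coefficient of \<open>h\<^sup>2\<close> in
  \<open>(f1 + h y1)(f2 + h y2)(f1 + h y1) - (f2 + h y2)(f1 + h y1)(f2 + h y2)\<close>.\<close>
definition braid_quadratic_part :: "complex^'m^'m \<Rightarrow> complex^'m^'m \<Rightarrow> complex^'m^'m" where
  "braid_quadratic_part y1 y2 =
     y1 ** y2 ** f1 + y1 ** f2 ** y1 + f1 ** y2 ** y1
     - (y2 ** y1 ** f2 + y2 ** f1 ** y2 + f2 ** y1 ** y2)"

lemma at13_csc_diff: "at13 (csc a A - csc b B) = csc a (at13 A) - csc b (at13 B)"
  by (simp add: at13_def matrix_expand_simps)

lemma at23_csc_diff: "at23 (csc a A - csc b B) = csc a (at23 A) - csc b (at23 B)"
  by (simp add: at23_def matrix_expand_simps)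

lemma at23_f1: "at23 f1 = f2"
  by (simp add: at23_def matrix_expand_simps involution_simps)

lemma braid_perturbation:
  assumes "h \<noteq> 0"
    and compat: "(f1 + csc h y1) ** f2 ** f1 = f2 ** f1 ** (f2 + csc h y2)"
    and braid_h: "(f1 + csc h y1) ** (f2 + csc h y2) ** (f1 + csc h y1)
                 = (f2 + csc h y2) ** (f1 + csc h y1) ** (f2 + csc h y2)"
  shows "y2 = at23 y1"
    and "braid_quadratic_part y1 y2 + csc h (y1 ** y2 ** y1 - y2 ** y1 ** y2) = 0"
proof -
  have "csc h (y1 ** f2 ** f1) = csc h (f2 ** f1 ** y2)"
    using compat by (simp add: matrix_expand_simps involution_simps)
  then have "f1 ** f2 ** (y1 ** f2 ** f1) = f1 ** f2 ** (f2 ** f1 ** y2)"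
    using \<open>h \<noteq> 0\<close> by (simp add: csc_cancel_left)
  then show y2: "y2 = at23 y1"
    by (simp add: at23_def involution_simps flip: matrix_mul_assoc)
  have "csc (h * h) (braid_quadratic_part y1 y2 + csc h (y1 ** y2 ** y1 - y2 ** y1 ** y2))
      = (f1 + csc h y1) ** (f2 + csc h y2) ** (f1 + csc h y1)
        - (f2 + csc h y2) ** (f1 + csc h y1) ** (f2 + csc h y2)"
    unfolding braid_quadratic_part_def y2 at23_def
    by (simp add: matrix_expand_simps involution_simps algebra_simps)
  then show "braid_quadratic_part y1 y2 + csc h (y1 ** y2 ** y1 - y2 ** y1 ** y2) = 0"
    using braid_h \<open>h \<noteq> 0\<close> by (simp add: csc_eq_0_iff)
qed

lemma braid_perturbation_limit:
  assumes y1: "(y1 \<longlongrightarrow> \<rho>1) (at 0)" and y2: "(y2 \<longlongrightarrow> \<rho>2) (at 0)"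
    and compat: "\<forall>\<^sub>F h in at 0. (f1 + csc h (y1 h)) ** f2 ** f1 = f2 ** f1 ** (f2 + csc h (y2 h))"
    and braid_h: "\<forall>\<^sub>F h in at 0. (f1 + csc h (y1 h)) ** (f2 + csc h (y2 h)) ** (f1 + csc h (y1 h))
                 = (f2 + csc h (y2 h)) ** (f1 + csc h (y1 h)) ** (f2 + csc h (y2 h))"
  shows "braid_quadratic_part \<rho>1 (at23 \<rho>1) = 0"
proof -
  define K where "K h = braid_quadratic_part (y1 h) (y2 h)
      + csc h (y1 h ** y2 h ** y1 h - y2 h ** y1 h ** y2 h)" for h
  have ev: "\<forall>\<^sub>F h in at 0. y2 h = at23 (y1 h) \<and> K h = 0"
    using compat braid_h eventually_neq_at_within[of 0 0 UNIV]
    by eventually_elim (use braid_perturbation in \<open>auto simp: K_def\<close>)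
  have at23_y1: "((\<lambda>h. at23 (y1 h)) \<longlongrightarrow> at23 \<rho>1) (at 0)"
    unfolding at23_def by (intro tendsto_intros y1)
  have \<rho>2: "\<rho>2 = at23 \<rho>1"
    by (rule tendsto_eventually_eq_imp_eq[OF at_neq_bot y2 at23_y1]) (use ev in \<open>auto elim: eventually_mono\<close>)
  have K: "(K \<longlongrightarrow> braid_quadratic_part \<rho>1 \<rho>2 + csc 0 (\<rho>1 ** \<rho>2 ** \<rho>1 - \<rho>2 ** \<rho>1 ** \<rho>2)) (at 0)"
    unfolding K_def braid_quadratic_part_def by (intro tendsto_intros y1 y2 tendsto_ident_at)
  have "braid_quadratic_part \<rho>1 \<rho>2 + csc 0 (\<rho>1 ** \<rho>2 ** \<rho>1 - \<rho>2 ** \<rho>1 ** \<rho>2) = 0"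
    by (rule tendsto_eventually_eq_imp_eq[OF at_neq_bot K tendsto_const])
       (use ev in \<open>auto elim: eventually_mono\<close>)
  then show ?thesis
    by (simp add: \<rho>2)
qed

lemma braid_quadratic_part_zero_imp_classical_ybe:
  assumes "braid_quadratic_part y (at23 y) = 0"
  shows "classical_ybe (y ** f1)"
proof -
  define P where "P = y ** f1"
  have y: "y = P ** f1"
    by (simp add: P_def involution_simps flip: matrix_mul_assoc)
  have "(commut P (at13 P) + commut P (at23 P) + commut (at13 P) (at23 P)) ** (f2 ** f1 ** f2)
      = braid_quadratic_part y (at23 y)"
    unfolding y at13_def at23_def commut_def braid_quadratic_part_def
    by (simp add: matrix_expand_simps involution_simps algebra_simps)
  then have "(commut P (at13 P) + commut P (at23 P) + commut (at13 P) (at23 P))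
      ** ((f2 ** f1 ** f2) ** (f2 ** f1 ** f2)) = 0"
    using assms by (simp add: matrix_mul_assoc)
  then show ?thesis
    by (simp add: classical_ybe_def P_def[symmetric] matrix_expand_simps involution_simps)
qed

lemma cybe_with_parameters:
  assumes unitary: "P + f1 ** P ** f1 = csc 2 f1" and ybe: "classical_ybe P"
    and abc: "a * b - a * c + b * c = b"
  shows "commut (csc a f1 - csc (1/2) P) (at13 (csc b f1 - csc (1/2) P))
       + commut (csc a f1 - csc (1/2) P) (at23 (csc c f1 - csc (1/2) P))
       + commut (at13 (csc b f1 - csc (1/2) P)) (at23 (csc c f1 - csc (1/2) P)) = 0"
proof -
  define G where "G = at13 f1"
  define Q where "Q = at13 P"
  define T where "T = at23 P"
  define W where "W = f2 ** f1 - f1 ** f2"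
  note simps = at13_def at23_def commut_def matrix_expand_simps involution_simps
  have f1_G: "commut f1 G = W" and f1_f2: "commut f1 f2 = - W" and G_f2: "commut G f2 = W"
    unfolding G_def W_def by (simp_all add: simps)
  have f1_Q: "commut f1 Q = - commut f1 T" and P_f2: "commut P f2 = - commut Q f2"
    unfolding Q_def T_def by (simp_all add: simps)
  have Q_T: "commut Q T = - commut P Q - commut P T"
    using ybe unfolding classical_ybe_def Q_def T_def by (simp add: algebra_simps eq_neg_iff_add_eq_0)
  have f1_P: "f1 ** P = csc 2 (mat 1) - P ** f1"
  proof -
    have "(P + f1 ** P ** f1) ** f1 = csc 2 f1 ** f1"
      using unitary by simp
    then show ?thesis
      by (simp add: matrix_expand_simps involution_simps eq_diff_eq add.commute)
  qed
  have P_f1: "P ** f1 = csc 2 (mat 1) - f1 ** P"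
    using f1_P by (simp add: algebra_simps)
  have "commut P G = commut T G + csc 2 W"
  proof -
    have "G ** T = f1 ** P ** (f2 ** f1)"
      unfolding G_def T_def by (simp add: simps)
    also have "\<dots> = csc 2 (f2 ** f1) - P ** G"
      unfolding f1_P G_def by (simp add: simps)
    finally have GT: "G ** T = csc 2 (f2 ** f1) - P ** G" .
    have "T ** G = (f1 ** f2) ** (P ** f1)"
      unfolding G_def T_def by (simp add: simps)
    also have "\<dots> = csc 2 (f1 ** f2) - G ** P"
      unfolding P_f1 G_def by (simp add: simps)
    finally have TG: "T ** G = csc 2 (f1 ** f2) - G ** P" .
    show ?thesis
      unfolding commut_def W_def GT TG by (simp add: matrix_expand_simps algebra_simps)
  qed
  then have P_G: "commut P G = - commut G T + csc 2 W"
    by (simp add: commut_def)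
  \<comment> \<open>With these rewrites the whole expression collapses to \<open>(a b - a c + b c - b) W\<close>.\<close>
  have "(a * b - a * c + b * c - b) * W $ i $ j = 0" for i j
    using abc by simp
  then show ?thesis
    unfolding at13_csc_diff at23_csc_diff at23_f1 G_def[symmetric] Q_def[symmetric] T_def[symmetric]
    by (simp add: commut_csc_diff f1_G f1_f2 G_f2 f1_Q P_f2 Q_T P_G vec_eq_iff algebra_simps)
qed

end

lemma braided_involutions_lift:
  assumes "involutive_symmetry F"
  shows "braided_involutions (lift12 F) (lift23 F)"
  using assms unfolding involutive_symmetry_def braiding_def
  by unfold_locales (simp_all flip: lift12_mult lift23_mult add: lift12_one lift23_one)

lemma rational_cybe_identity:
  fixes u v w :: "'a::field"
  assumes "u \<noteq> v" "u \<noteq> w" "v \<noteq> w"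
  shows "u/(u-v) * (u/(u-w)) - u/(u-v) * (v/(v-w)) + u/(u-w) * (v/(v-w)) = u/(u-w)"
proof -
  have "u - v \<noteq> 0" "u - w \<noteq> 0" "v - w \<noteq> 0"
    using assms by simp_all
  then show ?thesis
    by (simp add: divide_simps) (simp add: algebra_simps)
qed

lemma rfun_skew:
  fixes F r :: "'n::finite end2"
  assumes FF: "F ** F = mat 1" and unitary: "r + F ** r ** F = csc 2 F" and "u \<noteq> v"
  shows "ov21 F (rfun F r v u) + rfun F r u v = 0"
proof -
  have FrF: "F ** (r ** F) = csc 2 F - r"
    using unitary by (simp add: matrix_mul_assoc eq_diff_eq add.commute)
  have "ov21 F (rfun F r v u) + rfun F r u v = csc (v/(v-u) + u/(u-v) - 1) F"
    unfolding ov21_def rfun_def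
    by (simp add: matrix_expand_simps FF FrF csc_add_left csc_diff_left vec_eq_iff algebra_simps)
  also have "v/(v-u) + u/(u-v) - 1 = 0"
  proof -
    have "u - v \<noteq> 0" "v - u \<noteq> 0"
      using \<open>u \<noteq> v\<close> by simp_all
    then show ?thesis
      by (simp add: divide_simps) (simp add: algebra_simps)
  qed
  finally show ?thesis
    by simp
qed

lemma rfun_cybe:
  fixes F r :: "'n::finite end2"
  assumes F: "involutive_symmetry F" and unitary: "r + F ** r ** F = csc 2 F"
    and ybe: "braided_involutions.classical_ybe (lift12 F) (lift23 F) (lift12 r)"
    and "u \<noteq> v" "u \<noteq> w" "v \<noteq> w"
  shows "commut (ov12 (rfun F r u v)) (ov13 F (rfun F r u w))
       + commut (ov12 (rfun F r u v)) (ov23 F (rfun F r v w))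
       + commut (ov13 F (rfun F r u w)) (ov23 F (rfun F r v w)) = 0"
proof -
  interpret braided_involutions "lift12 F" "lift23 F"
    using F by (rule braided_involutions_lift)
  have ov13: "ov13 F X = at13 (lift12 X)" and ov23: "ov23 F X = at23 (lift12 X)" for X
    by (simp_all add: ov13_def ov23_def at13_def at23_def matrix_inv_involution involution_simps)
  have lift: "lift12 (rfun F r a b) = csc (a/(a-b)) (lift12 F) - csc (1/2) (lift12 r)" for a b
    by (simp add: rfun_def lift12_diff lift12_csc)
  have "lift12 r + lift12 F ** lift12 r ** lift12 F = csc 2 (lift12 F)"
    using arg_cong[OF unitary, of lift12] by (simp add: lift12_add lift12_mult lift12_csc)
  then show ?thesis
    unfolding ov12_def ov13 ov23 lift
    using cybe_with_parameters ybe rational_cybe_identity assms(4-6) by blast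
qed

theorem mainTheorem2:
  fixes F r :: "'n::finite end2"
    and R :: "complex \<Rightarrow> 'n end2"
    and S :: "complex set"
  assumes F_inv: "involutive_symmetry F"
    and S_open: "open S" and S_one: "1 \<in> S"
    and R_analytic: "\<And>i j. (\<lambda>q. R q $ i $ j) holomorphic_on S"
    and R_one: "R 1 = F"
    and R_hecke: "\<And>q. q \<in> S \<Longrightarrow> q \<noteq> 1 \<Longrightarrow> q \<noteq> -1 \<Longrightarrow> hecke_symmetry (R q) q"
    and R_compat: "\<And>q. q \<in> S \<Longrightarrow> compatible (R q) F"
    and r_exp: "\<exists>C. \<forall>\<^sub>F h in at 0.
                  norm (R (exp h) ** F - mat 1 - csc h r) \<le> C * norm h ^ 2"
  shows "(\<forall>u v. u \<noteq> v \<longrightarrow> ov21 F (rfun F r v u) + rfun F r u v = 0)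
       \<and> (\<forall>u v w. u \<noteq> v \<and> u \<noteq> w \<and> v \<noteq> w \<longrightarrow>
            commut (ov12 (rfun F r u v)) (ov13 F (rfun F r u w))
          + commut (ov12 (rfun F r u v)) (ov23 F (rfun F r v w))
          + commut (ov13 F (rfun F r u w)) (ov23 F (rfun F r v w)) = 0)"
proof -
  have FF: "F ** F = mat 1"
    using F_inv by (simp add: involutive_symmetry_def)
  interpret braided_involutions "lift12 F" "lift23 F"
    using F_inv by (rule braided_involutions_lift)
  define X where "X h = csc (1/h) (R (exp h) - F)" for h
  have X: "(X \<longlongrightarrow> r ** F) (at 0)"
    unfolding X_def by (rule difference_quotient_tendsto[OF FF r_exp])
  have "((\<lambda>h. exp h) \<longlongrightarrow> exp 0) (at (0::complex))"
    by (intro tendsto_intros)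
  then have "\<forall>\<^sub>F h in at 0. exp h \<in> S"
    using S_open S_one by (simp add: topological_tendstoD)
  then have R_X: "\<forall>\<^sub>F h in at 0. hecke_symmetry (F + csc h (X h)) (exp h)
                                  \<and> compatible (F + csc h (X h)) F"
    using eventually_exp_ne_1_neg1 eventually_neq_at_within[of 0 0 UNIV]
    by eventually_elim (simp add: X_def R_hecke R_compat csc_diff_right)
  have "F ** (r ** F) + r ** F ** F = csc 2 F"
    using hecke_first_order[OF FF X] R_X by (simp add: eventually_conj_iff)
  then have unitary: "r + F ** r ** F = csc 2 F"
    by (simp add: FF add.commute flip: matrix_mul_assoc)
  have "braid_quadratic_part (lift12 (r ** F)) (at23 (lift12 (r ** F))) = 0"
    using X R_X
    by (intro braid_perturbation_limit[of "\<lambda>h. lift12 (X h)" _ "\<lambda>h. lift23 (X h)" "lift23 (r ** F)"]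
          tendsto_intros)
       (auto elim!: eventually_mono
         simp: hecke_symmetry_def compatible_def braiding_def lift12_add lift12_csc lift23_add lift23_csc)
  then have "classical_ybe (lift12 (r ** F) ** lift12 F)"
    by (rule braid_quadratic_part_zero_imp_classical_ybe)
  then have ybe: "classical_ybe (lift12 r)"
    by (simp add: FF lift12_one flip: lift12_mult matrix_mul_assoc)
  show ?thesis
    using rfun_skew[OF FF unitary] rfun_cybe[OF F_inv unitary ybe] by blast
qed

end
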